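(* Let $d$ be a feasible integer and let $\{\zeta_i\}_{i=0}^d$ be any sequence of scalars in $\mathbb F$ with $\zeta_0=1$. Then there exists a standard $U_q(\widehat{\mathfrak{sl}}_2)$-module $V$ of diameter $d$ whose split sequence is $\{\zeta_i\}_{i=0}^d$.
   Context: Let $\mathbb F$ be an algebraically closed field and fix nonzero $q\in\mathbb F$ with $q^2\ne1$; write $[n]_q=(q^n-q^{-n})/(q-q^{-1})$. $U_q(\widehat{\mathfrak{sl}}_2)$ is the associative unital $\mathbb F$-algebra with generators $e_i^{\pm},K_i^{\pm1}$ ($i\in\{0,1\}$) and relations $K_iK_i^{-1}=K_i^{-1}K_i=1$, $K_0K_1=K_1K_0$, $K_ie_i^{\pm}K_i^{-1}=q^{\pm2}e_i^{\pm}$, $K_ie_j^{\pm}K_i^{-1}=q^{\mp2}e_j^{\pm}$ ($i\ne j$), $e_i^+e_i^--e_i^-e_i^+=(K_i-K_i^{-1})/(q-q^{-1})$, $e_0^{\pm}e_1^{\mp}=e_1^{\mp}e_0^{\pm}$, and $(e_i^\pm)^3e_j^\pm-[3]_q(e_i^\pm)^2e_j^\pm e_i^\pm+[3]_qe_i^\pm e_j^\pm(e_i^\pm)^2-e_j^\pm(e_i^\pm)^3=0$ ($i\ne j$). Tensor products of modules are formed via $e_i^+(v\otimes w)=e_i^+v\otimes K_iw+v\otimes e_i^+w$, $e_i^-(v\otimes w)=e_i^-v\otimes w+K_i^{-1}v\otimes e_i^-w$, $K_i(v\otimes w)=K_iv\otimes K_iw$. For nonzero $\alpha\in\mathbb F$,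 $V(\alpha)$ is the module with basis $x,y$ and $K_1x=qx$, $K_1y=q^{-1}y$, $e_1^-x=y$, $e_1^-y=0$, $e_1^+x=0$, $e_1^+y=x$, $K_0x=q^{-1}x$, $K_0y=qy$, $e_0^-x=0$, $e_0^-y=q\alpha^{-1}x$, $e_0^+x=q^{-1}\alpha y$, $e_0^+y=0$. A standard module of diameter $d$ is $V(\alpha_1)\otimes\cdots\otimes V(\alpha_d)$ with all $\alpha_i\in\mathbb F$ nonzero (for $d=0$: the trivial module, on which each $e_i^\pm$ acts as $0$ and each $K_i^{\pm1}$ as $1$). An integer $d$ is feasible if $d\ge0$ and $q^{2i}\ne1$ for $1\le i\le d$. For a standard $V$ of diameter $d$ and $0\le i\le d$, $U_i$ is the span of the basis vectors $v_1\otimes\cdots\otimes v_d$ ($v_k\in\{x,y\}$) with exactly $i$ factors equal to $y$. Fix nonzero $b,c,b^*,c^*\in\mathbb F$ and $u,v,u^*,v^*\in\mathbb F$ with $uv^*=-bb^*q^{-1}(q-q^{-1})^2$ and $vu^*=-cc^*q^{-1}(q-q^{-1})^2$; set $R=ue_0^++ve_1^-K_1$ and $L=u^*e_1^++v^*e_0^-K_0$. For a standard $V$ of feasible diameter $d$ and $0\le i\le d$, $L^iR^i$ maps the $1$-dimensional space $U_0$ into itself; the scalar $\zeta_i$ by which it acts there defines the split sequence $\{\zeta_i\}_{i=0}^d$ of $V$ (so $\zeta_0=1$). *)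

theory Defs
  imports "HOL-Computational_Algebra.Polynomial"
begin

text \<open>Vectors of a standard module V(alpha_1) (x) ... (x) V(alpha_d) are represented by
  their coefficient functions on the basis v_1 (x) ... (x) v_d, indexed by boolean lists
  of length d (False = x, True = y). Only the values on lists of length d matter.
  A 2x2 matrix M :: bool => bool => 'a acting on V(alpha) has entry M r c = coefficient
  of basis vector r in the image of basis vector c.\<close>

definition tens :: "(bool \<Rightarrow> bool \<Rightarrow> 'a::comm_ring_1)
    \<Rightarrow> ((bool list \<Rightarrow> 'a) \<Rightarrow> (bool list \<Rightarrow> 'a))
    \<Rightarrow> (bool list \<Rightarrow> 'a) \<Rightarrow> (bool list \<Rightarrow> 'a)" where
  "tens A B w = (\<lambda>l. case l of [] \<Rightarrow> 0
      | h # t \<Rightarrow> (\<Sum>h'\<in>UNIV. A h h' * B (\<lambda>t'. w (h' # t')) t))"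

definition idmat :: "bool \<Rightarrow> bool \<Rightarrow> 'a::comm_ring_1" where
  "idmat r c = (if r = c then 1 else 0)"

definition Kmat :: "nat \<Rightarrow> 'a::field \<Rightarrow> bool \<Rightarrow> bool \<Rightarrow> 'a" where
  "Kmat i q r c = (if r \<noteq> c then 0
     else if i = 1 then (if r then inverse q else q)
     else (if r then q else inverse q))"

definition Kinvmat :: "nat \<Rightarrow> 'a::field \<Rightarrow> bool \<Rightarrow> bool \<Rightarrow> 'a" where
  "Kinvmat i q r c = (if r \<noteq> c then 0
     else if i = 1 then (if r then q else inverse q)
     else (if r then inverse q else q))"

text \<open>e_i^+ : e_1^+ y = x, e_1^+ x = 0; e_0^+ x = q^{-1} alpha y, e_0^+ y = 0.\<close>
definition epmat :: "nat \<Rightarrow> 'a::field \<Rightarrow> 'a \<Rightarrow> bool \<Rightarrow> bool \<Rightarrow> 'a" where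
  "epmat i q \<alpha> r c = (if i = 1 then (if \<not> r \<and> c then 1 else 0)
     else (if r \<and> \<not> c then inverse q * \<alpha> else 0))"

text \<open>e_i^- : e_1^- x = y, e_1^- y = 0; e_0^- y = q alpha^{-1} x, e_0^- x = 0.\<close>
definition emmat :: "nat \<Rightarrow> 'a::field \<Rightarrow> 'a \<Rightarrow> bool \<Rightarrow> bool \<Rightarrow> 'a" where
  "emmat i q \<alpha> r c = (if i = 1 then (if r \<and> \<not> c then 1 else 0)
     else (if \<not> r \<and> c then q * inverse \<alpha> else 0))"

text \<open>Action on V(alpha_1) (x) (V(alpha_2) (x) ... ) via the given coproduct;
  the empty list of parameters is the trivial module (diameter 0).\<close>
fun Kop :: "nat \<Rightarrow> 'a::field \<Rightarrow> 'a list \<Rightarrow> (bool list \<Rightarrow> 'a) \<Rightarrow> (bool list \<Rightarrow> 'a)" where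
  "Kop i q [] w = w"
| "Kop i q (\<alpha> # as) w = tens (Kmat i q) (Kop i q as) w"

fun Kinvop :: "nat \<Rightarrow> 'a::field \<Rightarrow> 'a list \<Rightarrow> (bool list \<Rightarrow> 'a) \<Rightarrow> (bool list \<Rightarrow> 'a)" where
  "Kinvop i q [] w = w"
| "Kinvop i q (\<alpha> # as) w = tens (Kinvmat i q) (Kinvop i q as) w"

fun Epop :: "nat \<Rightarrow> 'a::field \<Rightarrow> 'a list \<Rightarrow> (bool list \<Rightarrow> 'a) \<Rightarrow> (bool list \<Rightarrow> 'a)" where
  "Epop i q [] w = (\<lambda>_. 0)"
| "Epop i q (\<alpha> # as) w =
     (\<lambda>l. tens (epmat i q \<alpha>) (Kop i q as) w l + tens idmat (Epop i q as) w l)"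

fun Emop :: "nat \<Rightarrow> 'a::field \<Rightarrow> 'a list \<Rightarrow> (bool list \<Rightarrow> 'a) \<Rightarrow> (bool list \<Rightarrow> 'a)" where
  "Emop i q [] w = (\<lambda>_. 0)"
| "Emop i q (\<alpha> # as) w =
     (\<lambda>l. tens (emmat i q \<alpha>) (\<lambda>z. z) w l + tens (Kinvmat i q) (Emop i q as) w l)"

definition Rop :: "'a::field \<Rightarrow> 'a \<Rightarrow> 'a \<Rightarrow> 'a list \<Rightarrow> (bool list \<Rightarrow> 'a) \<Rightarrow> (bool list \<Rightarrow> 'a)" where
  "Rop q u v as w = (\<lambda>l. u * Epop 0 q as w l + v * Emop 1 q as (Kop 1 q as w) l)"

definition Lop :: "'a::field \<Rightarrow> 'a \<Rightarrow> 'a \<Rightarrow> 'a list \<Rightarrow> (bool list \<Rightarrow> 'a) \<Rightarrow> (bool list \<Rightarrow> 'a)" where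
  "Lop q us vs as w = (\<lambda>l. us * Epop 1 q as w l + vs * Emop 0 q as (Kop 0 q as w) l)"

definition xvec :: "'a list \<Rightarrow> bool list \<Rightarrow> 'b::zero_neq_one" where
  "xvec as l = (if l = replicate (length as) False then 1 else 0)"

text \<open>Split sequence: zeta_i is the scalar by which L^i R^i acts on U_0, i.e. the
  x(x)...(x)x-coefficient of L^i R^i (x(x)...(x)x).\<close>
definition split_seq :: "'a::field \<Rightarrow> 'a \<Rightarrow> 'a \<Rightarrow> 'a \<Rightarrow> 'a \<Rightarrow> 'a list \<Rightarrow> nat \<Rightarrow> 'a" where
  "split_seq q u v us vs as i =
     ((Lop q us vs as ^^ i) ((Rop q u v as ^^ i) (xvec as)))
       (replicate (length as) False)"

definition feasible :: "'a::field \<Rightarrow> nat \<Rightarrow> bool" where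
  "feasible q d = (\<forall>i. 1 \<le> i \<and> i \<le> d \<longrightarrow> q ^ (2 * i) \<noteq> 1)"

end

theory Submission
  imports Defs
begin

text \<open>
  Write a standard module as \<open>V = V(\<alpha>) \<otimes> V'\<close>, so that \<open>V = x \<otimes> V' \<oplus> y \<otimes> V'\<close>.
  In this decomposition \<open>R\<close> and \<open>L\<close> are block triangular, with the operators of \<open>V'\<close> on the
  diagonal and, off the diagonal, combinations of \<open>K\<^sub>0, K\<^sub>1\<close>, which act on each \<open>U\<^sub>k\<close> as scalars.
  This gives the recursion \<open>\<zeta>\<^sub>i(V) = \<zeta>\<^sub>i(V') + c\<^sub>i(\<alpha>) \<zeta>\<^sub>i\<^sub>-\<^sub>1(V')\<close> with \<open>\<alpha> c\<^sub>i(\<alpha>)\<close> a quadratic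
  polynomial in \<open>\<alpha>\<close> whose constant term is nonzero by feasibility.

  To prescribe \<open>\<zeta>\<^sub>0, \<dots>, \<zeta>\<^sub>d\<close>, solve the recursion backwards for the sequence \<open>\<zeta>'\<close> that
  \<open>V'\<close> must realise. Since a module of diameter \<open>d - 1\<close> has \<open>\<zeta>'\<^sub>d = 0\<close>, the parameter
  \<open>\<alpha>\<close> must be a root of \<open>\<alpha>\<^sup>d \<zeta>'\<^sub>d(\<alpha>)\<close>, a polynomial of degree \<open>2d\<close> with nonzero constant term.
  Algebraic closure provides such a root \<open>\<alpha> \<noteq> 0\<close>, and \<open>\<zeta>'\<^sub>0, \<dots>, \<zeta>'\<^sub>d\<^sub>-\<^sub>1\<close> are realised by
  induction on \<open>d\<close>.
\<close>

lemma tens_Nil [simp]: "tens A B w [] = 0"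
  by (simp add: tens_def)

lemma tens_Cons [simp]:
  "tens A B w (h # t) = A h False * B (\<lambda>t'. w (False # t')) t + A h True * B (\<lambda>t'. w (True # t')) t"
  by (simp add: tens_def UNIV_bool)

definition linear_op :: "((bool list \<Rightarrow> 'a::comm_ring_1) \<Rightarrow> (bool list \<Rightarrow> 'a)) \<Rightarrow> bool" where
  "linear_op F \<longleftrightarrow> (\<forall>f g. F (\<lambda>l. f l + g l) = (\<lambda>l. F f l + F g l)) \<and>
                    (\<forall>c f. F (\<lambda>l. c * f l) = (\<lambda>l. c * F f l))"

lemma linear_op_add: "linear_op F \<Longrightarrow> F (\<lambda>l. f l + g l) = (\<lambda>l. F f l + F g l)"
  by (simp add: linear_op_def)

lemma linear_op_scale: "linear_op F \<Longrightarrow> F (\<lambda>l. c * f l) = (\<lambda>l. c * F f l)"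
  by (simp add: linear_op_def)

lemma linear_op_zero: "linear_op F \<Longrightarrow> F (\<lambda>l. 0) = (\<lambda>l. 0)"
  using linear_op_scale[of F 0 "\<lambda>l. 0"] by simp

lemma linear_op_id: "linear_op (\<lambda>w. w)"
  by (simp add: linear_op_def)

lemma linear_op_funpow: "linear_op F \<Longrightarrow> linear_op (F ^^ m)"
  by (induction m) (simp_all add: linear_op_def)

lemma linear_op_tens:
  assumes "linear_op B"
  shows "linear_op (tens A B)"
  unfolding linear_op_def
proof (intro conjI allI ext)
  fix f g l
  show "tens A B (\<lambda>l. f l + g l) l = tens A B f l + tens A B g l"
    using assms unfolding linear_op_def by (cases l) (simp_all add: algebra_simps)
next
  fix c f l
  show "tens A B (\<lambda>l. c * f l) l = c * tens A B f l"
    using assms unfolding linear_op_def by (cases l) (simp_all add: algebra_simps)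
qed

lemma linear_op_Kop: "linear_op (Kop i q as)"
  by (induction as) (simp_all add: linear_op_id linear_op_tens)

lemma linear_op_Epop: "linear_op (Epop i q as)"
proof (induction as)
  case (Cons a as)
  then show ?case
    using linear_op_tens[OF linear_op_Kop, of "epmat i q a" i q as] linear_op_tens[OF Cons.IH, of idmat]
    unfolding linear_op_def by (simp add: algebra_simps)
qed (simp add: linear_op_def)

lemma linear_op_Emop: "linear_op (Emop i q as)"
proof (induction as)
  case (Cons a as)
  then show ?case
    using linear_op_tens[OF linear_op_id, of "emmat i q a"] linear_op_tens[OF Cons.IH, of "Kinvmat i q"]
    unfolding linear_op_def by (simp add: algebra_simps)
qed (simp add: linear_op_def)

lemma linear_op_Rop: "linear_op (Rop q u v as)"
  using linear_op_Epop[of 0 q as] linear_op_Emop[of 1 q as] linear_op_Kop[of 1 q as]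
  unfolding linear_op_def Rop_def by (simp add: algebra_simps)

lemma linear_op_Lop: "linear_op (Lop q us vs as)"
  using linear_op_Epop[of 1 q as] linear_op_Emop[of 0 q as] linear_op_Kop[of 0 q as]
  unfolding linear_op_def Lop_def by (simp add: algebra_simps)

subsection \<open>Weight spaces\<close>

text \<open>The weight
  is an integer so that lowering \<open>U\<^sub>0\<close> needs no truncated subtraction.\<close>

definition in_U :: "nat \<Rightarrow> int \<Rightarrow> (bool list \<Rightarrow> 'a::zero) \<Rightarrow> bool" where
  "in_U n k w \<longleftrightarrow> (\<forall>l. w l \<noteq> 0 \<longrightarrow> length l = n \<and> int (count_list l True) = k)"

definition shifts_U :: "nat \<Rightarrow> int \<Rightarrow> ((bool list \<Rightarrow> 'a::zero) \<Rightarrow> (bool list \<Rightarrow> 'a)) \<Rightarrow> bool" where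
  "shifts_U n s F \<longleftrightarrow> (\<forall>k w. in_U n k w \<longrightarrow> in_U n (k + s) (F w))"

lemma in_U_zero: "in_U n k (\<lambda>l. 0)"
  by (simp add: in_U_def)

lemma in_U_add: "in_U n k f \<Longrightarrow> in_U n k g \<Longrightarrow> in_U n k (\<lambda>l. f l + g l :: 'a::comm_monoid_add)"
  unfolding in_U_def by (metis add.left_neutral)

lemma in_U_scale: "in_U n k f \<Longrightarrow> in_U n k (\<lambda>l. c * f l :: 'a::mult_zero)"
  unfolding in_U_def by (metis mult_zero_right)

lemma in_U_xvec: "in_U (length as) 0 (xvec as)"
  by (simp add: in_U_def xvec_def)

lemma in_U_above_length:
  assumes "in_U n k w" and "int n < k"
  shows "w = (\<lambda>l. 0)"
proof
  fix l
  show "w l = 0"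
    using assms count_le_length[of l True] unfolding in_U_def by force
qed

lemma in_U_Cons:
  assumes "in_U (Suc n) k w"
  shows "in_U n (k - of_bool h) (\<lambda>t. w (h # t))"
  using assms by (cases h) (auto simp: in_U_def)

lemma shifts_U_add:
  "shifts_U n s F \<Longrightarrow> shifts_U n s G \<Longrightarrow> shifts_U n s (\<lambda>w l. F w l + G w l :: 'a::comm_monoid_add)"
  by (simp add: shifts_U_def in_U_add)

lemma shifts_U_funpow:
  assumes "shifts_U n s F"
  shows "shifts_U n (int m * s) (F ^^ m)"
proof (induction m)
  case (Suc m)
  show ?case
    unfolding shifts_U_def
  proof (intro allI impI)
    fix k and w :: "bool list \<Rightarrow> 'a"
    assume "in_U n k w"
    then have "in_U n (k + int m * s + s) (F ((F ^^ m) w))"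
      using Suc.IH assms by (simp add: shifts_U_def)
    then show "in_U n (k + int (Suc m) * s) ((F ^^ Suc m) w)"
      by (simp add: algebra_simps)
  qed
qed (simp add: shifts_U_def)

lemma shifts_U_tens:
  fixes A :: "bool \<Rightarrow> bool \<Rightarrow> 'a::comm_ring_1"
  assumes B: "shifts_U n t B" and A: "\<And>h h'. A h h' \<noteq> 0 \<Longrightarrow> of_bool h = of_bool h' + s"
  shows "shifts_U (Suc n) (s + t) (tens A B)"
  unfolding shifts_U_def
proof (intro allI impI)
  fix k and w :: "bool list \<Rightarrow> 'a"
  assume w: "in_U (Suc n) k w"
  show "in_U (Suc n) (k + (s + t)) (tens A B w)"
    unfolding in_U_def
  proof (intro allI impI)
    fix l assume nz: "tens A B w l \<noteq> 0"
    then obtain h r where l: "l = h # r" by (cases l) auto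
    from nz obtain h' where A_nz: "A h h' \<noteq> 0" and B_nz: "B (\<lambda>r'. w (h' # r')) r \<noteq> 0"
      unfolding l tens_Cons by (metis add.left_neutral mult_zero_left mult_zero_right)
    from A_nz have "of_bool h = of_bool h' + s"
      by (rule A)
    moreover have "in_U n (k - of_bool h' + t) (B (\<lambda>r'. w (h' # r')))"
      using B in_U_Cons[OF w] by (simp add: shifts_U_def)
    moreover have "int (count_list (h # r) True) = of_bool h + int (count_list r True)"
      by (cases h) simp_all
    ultimately show "length l = Suc n \<and> int (count_list l True) = k + (s + t)"
      using B_nz unfolding l in_U_def by auto
  qed
qed

lemma shifts_U_id: "shifts_U n 0 (\<lambda>w. w)"
  by (simp add: shifts_U_def)

lemma shifts_U_Kop: "shifts_U (length as) 0 (Kop i q as)"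
proof (induction as)
  case (Cons a as)
  have "shifts_U (Suc (length as)) (0 + 0) (tens (Kmat i q) (Kop i q as))"
    by (rule shifts_U_tens[OF Cons.IH]) (simp add: Kmat_def split: if_splits)
  then show ?case by simp
qed (simp add: shifts_U_id)

lemma shifts_U_Epop: "shifts_U (length as) (if i = 1 then -1 else 1) (Epop i q as)"
proof (induction as)
  case Nil
  show ?case by (simp add: shifts_U_def in_U_zero)
next
  case (Cons a as)
  let ?s = "if i = 1 then -1 else 1 :: int"
  have "shifts_U (Suc (length as)) (?s + 0) (tens (epmat i q a) (Kop i q as))"
    by (rule shifts_U_tens[OF shifts_U_Kop]) (auto simp: epmat_def split: if_splits)
  moreover have "shifts_U (Suc (length as)) (0 + ?s) (tens idmat (Epop i q as))"
    by (rule shifts_U_tens[OF Cons.IH]) (simp add: idmat_def split: if_splits)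
  moreover have "Epop i q (a # as) = (\<lambda>w l. tens (epmat i q a) (Kop i q as) w l + tens idmat (Epop i q as) w l)"
    by (simp add: fun_eq_iff)
  ultimately show ?case
    using shifts_U_add by fastforce
qed

lemma shifts_U_Emop: "shifts_U (length as) (if i = 1 then 1 else -1) (Emop i q as)"
proof (induction as)
  case Nil
  show ?case by (simp add: shifts_U_def in_U_zero)
next
  case (Cons a as)
  let ?s = "if i = 1 then 1 else -1 :: int"
  have "shifts_U (Suc (length as)) (?s + 0) (tens (emmat i q a) (\<lambda>w. w))"
    by (rule shifts_U_tens[OF shifts_U_id]) (auto simp: emmat_def split: if_splits)
  moreover have "shifts_U (Suc (length as)) (0 + ?s) (tens (Kinvmat i q) (Emop i q as))"
    by (rule shifts_U_tens[OF Cons.IH]) (simp add: Kinvmat_def split: if_splits)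
  moreover have "Emop i q (a # as) = (\<lambda>w l. tens (emmat i q a) (\<lambda>w. w) w l + tens (Kinvmat i q) (Emop i q as) w l)"
    by (simp add: fun_eq_iff)
  ultimately show ?case
    using shifts_U_add by fastforce
qed

lemma shifts_U_Rop: "shifts_U (length as) 1 (Rop q u v as)"
  unfolding shifts_U_def Rop_def
proof (intro allI impI)
  fix k and w :: "bool list \<Rightarrow> 'a"
  assume "in_U (length as) k w"
  then show "in_U (length as) (k + 1) (\<lambda>l. u * Epop 0 q as w l + v * Emop 1 q as (Kop 1 q as w) l)"
    using shifts_U_Epop[where i=0 and as=as and q=q] shifts_U_Emop[where i=1 and as=as and q=q]
      shifts_U_Kop[where i=1 and as=as and q=q]
    by (intro in_U_add in_U_scale) (simp_all add: shifts_U_def)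
qed

lemma shifts_U_Lop: "shifts_U (length as) (-1) (Lop q us vs as)"
  unfolding shifts_U_def Lop_def
proof (intro allI impI)
  fix k and w :: "bool list \<Rightarrow> 'a"
  assume "in_U (length as) k w"
  then show "in_U (length as) (k + -1) (\<lambda>l. us * Epop 1 q as w l + vs * Emop 0 q as (Kop 0 q as w) l)"
    using shifts_U_Epop[where i=1 and as=as and q=q] shifts_U_Emop[where i=0 and as=as and q=q]
      shifts_U_Kop[where i=0 and as=as and q=q]
    by (intro in_U_add in_U_scale) (simp_all add: shifts_U_def)
qed

lemma in_U_Rop_funpow:
  "in_U (length as) k w \<Longrightarrow> in_U (length as) (k + int m) ((Rop q u v as ^^ m) w)"
  using shifts_U_funpow[OF shifts_U_Rop[where as=as and q=q and u=u and v=v], where m=m]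
  by (simp add: shifts_U_def)

lemma in_U_Lop_funpow:
  "in_U (length as) k w \<Longrightarrow> in_U (length as) (k - int m) ((Lop q us vs as ^^ m) w)"
  using shifts_U_funpow[OF shifts_U_Lop[where as=as and q=q and us=us and vs=vs], where m=m]
  by (simp add: shifts_U_def)

text \<open>The eigenvalue \<open>q\<^sup>n\<^sup>-\<^sup>2\<^sup>k\<close> of \<open>K\<^sub>1\<close> on \<open>U\<^sub>k\<close>; that of \<open>K\<^sub>0\<close> is \<open>Kscalar (inverse q) n k\<close>.\<close>

definition Kscalar :: "'a::field \<Rightarrow> nat \<Rightarrow> nat \<Rightarrow> 'a" where
  "Kscalar q n k = q ^ (n - k) * inverse q ^ k"

lemma Kop_0_eq_Kop_1: "Kop 0 q as = Kop 1 (inverse q) as"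
proof -
  have Kmat: "Kmat 0 q = Kmat 1 (inverse q)"
    by (simp add: fun_eq_iff Kmat_def)
  show ?thesis
  proof (induction as)
    case (Cons a as)
    show ?case
      by (rule ext) (simp add: Kmat Cons.IH)
  qed simp
qed

lemma Kop_vanishes: "w l = 0 \<Longrightarrow> Kop i q as w l = 0"
proof (induction as arbitrary: w l)
  case (Cons a as)
  then show ?case
    by (cases l) (auto simp: Kmat_def)
qed simp

lemma Kop_1_basis:
  "length l = length as \<Longrightarrow> Kop 1 q as w l = Kscalar q (length as) (count_list l True) * w l"
proof (induction as arbitrary: w l)
  case (Cons a as)
  then obtain h r where l: "l = h # r" and r: "length r = length as"
    by (cases l) auto
  have "count_list r True \<le> length as"
    using count_le_length r by metis
  then show ?case
    using Cons.IH[OF r] unfolding l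
    by (cases h) (simp_all add: Kmat_def Kscalar_def Suc_diff_le)
qed (simp add: Kscalar_def)

lemma Kop_1_in_U:
  assumes "in_U (length as) (int k) w"
  shows "Kop 1 q as w = (\<lambda>l. Kscalar q (length as) k * w l)"
proof
  fix l
  show "Kop 1 q as w l = Kscalar q (length as) k * w l"
  proof (cases "w l = 0")
    case True
    then show ?thesis
      by (simp add: Kop_vanishes)
  next
    case False
    with assms Kop_1_basis show ?thesis
      unfolding in_U_def by fastforce
  qed
qed

lemma Kscalar_eq_power:
  assumes "q \<noteq> 0" and "k \<le> n"
  shows "Kscalar q n k = q ^ n * (inverse q ^ 2) ^ k"
  using assms by (simp add: Kscalar_def power_diff field_simps mult_2_right power_add flip: power_mult)

lemma sum_Kscalar_nonzero:
  assumes "q \<noteq> 0" and "q ^ 2 \<noteq> 1" and "q ^ (2 * i) \<noteq> 1" and "i \<le> Suc n"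
  shows "(\<Sum>k<i. Kscalar q n k) \<noteq> 0"
proof -
  have "(\<Sum>k<i. Kscalar q n k) = q ^ n * (\<Sum>k<i. (inverse q ^ 2) ^ k)"
    using assms by (simp add: Kscalar_eq_power sum_distrib_left)
  moreover have "inverse q ^ 2 \<noteq> 1" and "(inverse q ^ 2) ^ i \<noteq> 1"
    using assms by (simp_all add: power_inverse flip: power_mult)
  ultimately show ?thesis
    using assms(1) by (simp add: geometric_sum)
qed

subsection \<open>Block structure over \<open>V(\<alpha>) \<otimes> V'\<close>\<close>

lemmas linear_op_scale_simps =
  linear_op_scale[OF linear_op_Emop] linear_op_scale[OF linear_op_Epop] linear_op_scale[OF linear_op_Kop]

lemma Rop_Cons_False:
  "q \<noteq> 0 \<Longrightarrow> Rop q u v (a # as) w (False # t) = Rop q u v as (\<lambda>t. w (False # t)) t"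
  by (simp add: Rop_def Kmat_def Kinvmat_def emmat_def epmat_def idmat_def linear_op_scale_simps)

lemma Rop_Cons_True:
  "q \<noteq> 0 \<Longrightarrow> Rop q u v (a # as) w (True # t) =
     u * inverse q * a * Kop 0 q as (\<lambda>t. w (False # t)) t
     + v * q * Kop 1 q as (\<lambda>t. w (False # t)) t + Rop q u v as (\<lambda>t. w (True # t)) t"
  by (simp add: Rop_def Kmat_def Kinvmat_def emmat_def epmat_def idmat_def linear_op_scale_simps algebra_simps)

lemma Lop_Cons_False:
  "q \<noteq> 0 \<Longrightarrow> Lop q us vs (a # as) w (False # t) = Lop q us vs as (\<lambda>t. w (False # t)) t
     + us * Kop 1 q as (\<lambda>t. w (True # t)) t
     + vs * q * q * inverse a * Kop 0 q as (\<lambda>t. w (True # t)) t"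
  by (simp add: Lop_def Kmat_def Kinvmat_def emmat_def epmat_def idmat_def linear_op_scale_simps algebra_simps)

lemma Lop_Cons_True:
  "q \<noteq> 0 \<Longrightarrow> Lop q us vs (a # as) w (True # t) = Lop q us vs as (\<lambda>t. w (True # t)) t"
  by (simp add: Lop_def Kmat_def Kinvmat_def emmat_def epmat_def idmat_def linear_op_scale_simps)

definition R_offdiag :: "'a::field \<Rightarrow> 'a \<Rightarrow> 'a \<Rightarrow> 'a \<Rightarrow> nat \<Rightarrow> nat \<Rightarrow> 'a" where
  "R_offdiag q u v a n k = u * inverse q * a * Kscalar (inverse q) n k + v * q * Kscalar q n k"

definition L_offdiag :: "'a::field \<Rightarrow> 'a \<Rightarrow> 'a \<Rightarrow> 'a \<Rightarrow> nat \<Rightarrow> nat \<Rightarrow> 'a" where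
  "L_offdiag q us vs a n k = us * Kscalar q n k + vs * q * q * inverse a * Kscalar (inverse q) n k"

lemma Rop_Cons_True_in_U:
  assumes "q \<noteq> 0" and "in_U (length as) (int k) (\<lambda>t. w (False # t))"
  shows "Rop q u v (a # as) w (True # t) =
           R_offdiag q u v a (length as) k * w (False # t) + Rop q u v as (\<lambda>t. w (True # t)) t"
  unfolding Rop_Cons_True[OF assms(1)] Kop_0_eq_Kop_1 Kop_1_in_U[OF assms(2)]
  by (simp add: R_offdiag_def algebra_simps)

lemma Lop_Cons_False_in_U:
  assumes "q \<noteq> 0" and "in_U (length as) (int k) (\<lambda>t. w (True # t))"
  shows "Lop q us vs (a # as) w (False # t) =
           Lop q us vs as (\<lambda>t. w (False # t)) t + L_offdiag q us vs a (length as) k * w (True # t)"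
  unfolding Lop_Cons_False[OF assms(1)] Kop_0_eq_Kop_1 Kop_1_in_U[OF assms(2)]
  by (simp add: L_offdiag_def algebra_simps)

lemma Rop_funpow_Cons:
  assumes q: "q \<noteq> 0"
  shows "(\<lambda>t. (Rop q u v (a # as) ^^ i) (xvec (a # as)) (False # t)) = (Rop q u v as ^^ i) (xvec as) \<and>
    (\<lambda>t. (Rop q u v (a # as) ^^ i) (xvec (a # as)) (True # t)) =
      (\<lambda>t. (\<Sum>k<i. R_offdiag q u v a (length as) k) * (Rop q u v as ^^ (i - 1)) (xvec as) t)"
proof (induction i)
  case 0
  show ?case by (simp add: xvec_def fun_eq_iff)
next
  case (Suc i)
  let ?R = "Rop q u v as" and ?x = "xvec as :: bool list \<Rightarrow> 'a"
  let ?c = "\<Sum>k<i. R_offdiag q u v a (length as) k"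
  define P where "P = (Rop q u v (a # as) ^^ i) (xvec (a # as))"
  from Suc.IH have PF: "(\<lambda>t. P (False # t)) = (?R ^^ i) ?x"
    and PT: "(\<lambda>t. P (True # t)) = (\<lambda>t. ?c * (?R ^^ (i - 1)) ?x t)"
    by (simp_all add: P_def)
  have PF_in_U: "in_U (length as) (int i) (\<lambda>t. P (False # t))"
    unfolding PF using in_U_Rop_funpow[OF in_U_xvec] by simp
  have R_PT: "?R (\<lambda>t. P (True # t)) = (\<lambda>t. ?c * (?R ^^ i) ?x t)"
  proof (cases i)
    case 0
    then show ?thesis by (simp add: PT linear_op_zero[OF linear_op_Rop])
  next
    case (Suc j)
    then show ?thesis by (simp add: PT linear_op_scale[OF linear_op_Rop])
  qed
  have "(\<lambda>t. Rop q u v (a # as) P (False # t)) = (?R ^^ Suc i) ?x"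
    using PF by (simp add: Rop_Cons_False[OF q])
  moreover have "(\<lambda>t. Rop q u v (a # as) P (True # t)) =
      (\<lambda>t. (\<Sum>k<Suc i. R_offdiag q u v a (length as) k) * (?R ^^ i) ?x t)"
    using PF R_PT by (simp add: Rop_Cons_True_in_U[OF q PF_in_U] fun_eq_iff algebra_simps)
  ultimately show ?case
    by (simp add: P_def)
qed

text \<open>The \<open>y\<close>-component of \<open>L\<^sup>k V\<close> has weight \<open>j - k\<close>, hence the reversed indices.\<close>

lemma Lop_funpow_Cons:
  assumes q: "q \<noteq> 0" and V_True: "in_U (length as) (int j) (\<lambda>t. V (True # t))"
  shows "m \<le> Suc j \<Longrightarrow>
    (\<lambda>t. (Lop q us vs (a # as) ^^ m) V (False # t)) =
      (\<lambda>t. (Lop q us vs as ^^ m) (\<lambda>t. V (False # t)) t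
         + (\<Sum>k<m. L_offdiag q us vs a (length as) (j - k)) * (Lop q us vs as ^^ (m - 1)) (\<lambda>t. V (True # t)) t) \<and>
    (\<lambda>t. (Lop q us vs (a # as) ^^ m) V (True # t)) = (Lop q us vs as ^^ m) (\<lambda>t. V (True # t))"
proof (induction m)
  case 0
  show ?case by simp
next
  case (Suc m)
  let ?L = "Lop q us vs as" and ?vF = "\<lambda>t. V (False # t)" and ?vT = "\<lambda>t. V (True # t)"
  let ?c = "\<Sum>k<m. L_offdiag q us vs a (length as) (j - k)"
  define P where "P = (Lop q us vs (a # as) ^^ m) V"
  from Suc have PF: "(\<lambda>t. P (False # t)) = (\<lambda>t. (?L ^^ m) ?vF t + ?c * (?L ^^ (m - 1)) ?vT t)"
    and PT: "(\<lambda>t. P (True # t)) = (?L ^^ m) ?vT"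
    by (simp_all add: P_def)
  have PT_in_U: "in_U (length as) (int (j - m)) (\<lambda>t. P (True # t))"
    unfolding PT using in_U_Lop_funpow[OF V_True, where m=m] Suc.prems by simp
  have L_PF: "?L (\<lambda>t. P (False # t)) = (\<lambda>t. (?L ^^ Suc m) ?vF t + ?c * (?L ^^ m) ?vT t)"
  proof (cases m)
    case 0
    then show ?thesis by (simp add: PF linear_op_add[OF linear_op_Lop] linear_op_zero[OF linear_op_Lop])
  next
    case (Suc k)
    then show ?thesis by (simp add: PF linear_op_add[OF linear_op_Lop] linear_op_scale[OF linear_op_Lop])
  qed
  have "(\<lambda>t. Lop q us vs (a # as) P (False # t)) =
      (\<lambda>t. (?L ^^ Suc m) ?vF t + (\<Sum>k<Suc m. L_offdiag q us vs a (length as) (j - k)) * (?L ^^ m) ?vT t)"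
    using PT L_PF by (simp add: Lop_Cons_False_in_U[OF q PT_in_U] fun_eq_iff algebra_simps)
  moreover have "(\<lambda>t. Lop q us vs (a # as) P (True # t)) = (?L ^^ Suc m) ?vT"
    using PT by (simp add: Lop_Cons_True[OF q])
  ultimately show ?case
    by (simp add: P_def)
qed

subsection \<open>The split recursion\<close>

definition split_coeff :: "'a::field \<Rightarrow> 'a \<Rightarrow> 'a \<Rightarrow> 'a \<Rightarrow> 'a \<Rightarrow> 'a \<Rightarrow> nat \<Rightarrow> nat \<Rightarrow> 'a" where
  "split_coeff q u v us vs a n i =
     (\<Sum>k<i. L_offdiag q us vs a n k) * (\<Sum>k<i. R_offdiag q u v a n k)"

lemma split_seq_0: "split_seq q u v us vs as 0 = 1"
  by (simp add: split_seq_def xvec_def)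

lemma split_seq_above_length:
  assumes "length as < i"
  shows "split_seq q u v us vs as i = 0"
proof -
  have "in_U (length as) (int i) ((Rop q u v as ^^ i) (xvec as))"
    using in_U_Rop_funpow[OF in_U_xvec] by simp
  then have "(Rop q u v as ^^ i) (xvec as) = (\<lambda>l. 0)"
    using assms by (simp add: in_U_above_length)
  then show ?thesis
    by (simp add: split_seq_def linear_op_zero[OF linear_op_funpow[OF linear_op_Lop]])
qed

lemma split_seq_Cons:
  assumes q: "q \<noteq> 0" and i: "1 \<le> i"
  shows "split_seq q u v us vs (a # as) i =
    split_seq q u v us vs as i + split_coeff q u v us vs a (length as) i * split_seq q u v us vs as (i - 1)"
proof -
  let ?R = "Rop q u v as" and ?L = "Lop q us vs as" and ?x = "xvec as :: bool list \<Rightarrow> 'a"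
  let ?sR = "\<Sum>k<i. R_offdiag q u v a (length as) k"
  let ?sL = "\<Sum>k<i. L_offdiag q us vs a (length as) k"
  let ?origin = "replicate (length as) False"
  define V where "V = (Rop q u v (a # as) ^^ i) (xvec (a # as))"
  from Rop_funpow_Cons[OF q, where i=i] have V_False: "(\<lambda>t. V (False # t)) = (?R ^^ i) ?x"
    and V_True: "(\<lambda>t. V (True # t)) = (\<lambda>t. ?sR * (?R ^^ (i - 1)) ?x t)"
    by (simp_all add: V_def)
  have "in_U (length as) (int (i - 1)) (\<lambda>t. V (True # t))"
    unfolding V_True using in_U_scale[OF in_U_Rop_funpow[OF in_U_xvec]] by simp
  from Lop_funpow_Cons[OF q this, where m=i] i
  have "(\<lambda>t. (Lop q us vs (a # as) ^^ i) V (False # t)) =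
      (\<lambda>t. (?L ^^ i) ((?R ^^ i) ?x) t
         + (\<Sum>k<i. L_offdiag q us vs a (length as) (i - Suc k)) * (?L ^^ (i - 1)) (\<lambda>t. ?sR * (?R ^^ (i - 1)) ?x t) t)"
    unfolding V_False V_True by (simp add: diff_diff_add)
  also have "(\<Sum>k<i. L_offdiag q us vs a (length as) (i - Suc k)) = ?sL"
    by (rule sum.nat_diff_reindex)
  finally have "split_seq q u v us vs (a # as) i
      = (?L ^^ i) ((?R ^^ i) ?x) ?origin + ?sL * (?sR * (?L ^^ (i - 1)) ((?R ^^ (i - 1)) ?x) ?origin)"
    by (simp add: split_seq_def V_def fun_eq_iff linear_op_scale[OF linear_op_funpow[OF linear_op_Lop]])
  then show ?thesis
    by (simp add: split_seq_def split_coeff_def)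
qed

subsection \<open>Choosing the first parameter\<close>

text \<open>With \<open>C i a = c\<^sub>i(a)\<close>, \<open>residual Z C a\<close> is the sequence \<open>\<zeta>'\<close> that the remaining factors
  must realise when the first parameter is \<open>a\<close>.\<close>

fun residual :: "(nat \<Rightarrow> 'a) \<Rightarrow> (nat \<Rightarrow> 'a \<Rightarrow> 'a) \<Rightarrow> 'a \<Rightarrow> nat \<Rightarrow> 'a::field" where
  "residual Z C a 0 = 1"
| "residual Z C a (Suc i) = Z (Suc i) - C (Suc i) a * residual Z C a i"

fun residual_poly :: "(nat \<Rightarrow> 'a) \<Rightarrow> (nat \<Rightarrow> 'a poly) \<Rightarrow> nat \<Rightarrow> 'a::field poly" where
  "residual_poly Z Q 0 = 1"
| "residual_poly Z Q (Suc i) = monom (Z (Suc i)) (Suc i) - Q (Suc i) * residual_poly Z Q i"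

lemma poly_residual_poly:
  assumes "\<And>i. 1 \<le> i \<Longrightarrow> i \<le> N \<Longrightarrow> a * C i a = poly (Q i) a" and "i \<le> N"
  shows "poly (residual_poly Z Q i) a = a ^ i * residual Z C a i"
  using assms(2)
proof (induction i)
  case (Suc i)
  then have "poly (residual_poly Z Q (Suc i)) a
      = Z (Suc i) * a ^ Suc i - (a * C (Suc i) a) * (a ^ i * residual Z C a i)"
    using assms(1)[of "Suc i"] by (simp add: poly_monom)
  then show ?case
    by (simp add: algebra_simps)
qed simp

lemma degree_residual_poly:
  assumes "\<And>i. 1 \<le> i \<Longrightarrow> i \<le> N \<Longrightarrow> degree (Q i) = 2 \<and> coeff (Q i) 0 \<noteq> 0" and "i \<le> N"
  shows "degree (residual_poly Z Q i) = 2 * i \<and> coeff (residual_poly Z Q i) 0 \<noteq> 0"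
  using assms(2)
proof (induction i)
  case (Suc i)
  let ?P = "residual_poly Z Q i"
  have P: "degree ?P = 2 * i" "coeff ?P 0 \<noteq> 0" and Q: "degree (Q (Suc i)) = 2" "coeff (Q (Suc i)) 0 \<noteq> 0"
    using Suc assms(1)[of "Suc i"] by auto
  then have deg_prod: "degree (Q (Suc i) * ?P) = 2 * Suc i"
    by (subst degree_mult_eq) auto
  then have "degree (monom (Z (Suc i)) (Suc i)) < degree (- (Q (Suc i) * ?P))"
    using degree_monom_le[of "Z (Suc i)" "Suc i"] by simp
  then have "degree (residual_poly Z Q (Suc i)) = 2 * Suc i"
    using degree_add_eq_right deg_prod by fastforce
  moreover have "coeff (residual_poly Z Q (Suc i)) 0 \<noteq> 0"
    using P Q by (simp add: coeff_mult_0)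
  ultimately show ?case ..
qed simp

lemma residual_has_nonzero_root:
  fixes C :: "nat \<Rightarrow> 'a::field \<Rightarrow> 'a"
  assumes alg_closed: "\<forall>p :: 'a poly. 0 < degree p \<longrightarrow> (\<exists>x. poly p x = 0)"
    and C_poly: "\<And>i a. 1 \<le> i \<Longrightarrow> i \<le> N \<Longrightarrow> a \<noteq> 0 \<Longrightarrow> a * C i a = poly (Q i) a"
    and Q: "\<And>i. 1 \<le> i \<Longrightarrow> i \<le> N \<Longrightarrow> degree (Q i) = 2 \<and> coeff (Q i) 0 \<noteq> 0"
    and "0 < N"
  shows "\<exists>a. a \<noteq> 0 \<and> residual Z C a N = 0"
proof -
  let ?P = "residual_poly Z Q N"
  have P: "degree ?P = 2 * N" "coeff ?P 0 \<noteq> 0"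
    using degree_residual_poly[OF Q] by auto
  then obtain a where root: "poly ?P a = 0"
    using alg_closed \<open>0 < N\<close> by (metis mult_pos_pos zero_less_numeral)
  have "a \<noteq> 0"
    using root P(2) by (auto simp: poly_0_coeff_0)
  moreover have "poly ?P a = a ^ N * residual Z C a N"
    using C_poly \<open>a \<noteq> 0\<close> by (intro poly_residual_poly[where N=N]) auto
  ultimately show ?thesis
    using root by auto
qed

definition split_coeff_poly :: "'a::field \<Rightarrow> 'a \<Rightarrow> 'a \<Rightarrow> 'a \<Rightarrow> 'a \<Rightarrow> nat \<Rightarrow> nat \<Rightarrow> 'a poly" where
  "split_coeff_poly q u v us vs n i =
     [: vs * q * q * (\<Sum>k<i. Kscalar (inverse q) n k), us * (\<Sum>k<i. Kscalar q n k) :] *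
     [: v * q * (\<Sum>k<i. Kscalar q n k), u * inverse q * (\<Sum>k<i. Kscalar (inverse q) n k) :]"

lemma poly_split_coeff_poly:
  assumes "a \<noteq> 0"
  shows "a * split_coeff q u v us vs a n i = poly (split_coeff_poly q u v us vs n i) a"
  using assms
  by (simp add: split_coeff_def split_coeff_poly_def L_offdiag_def R_offdiag_def
      sum.distrib flip: sum_distrib_left) (simp add: field_simps)

lemma degree_split_coeff_poly:
  assumes "q \<noteq> 0" and "u \<noteq> 0" "v \<noteq> 0" "us \<noteq> 0" "vs \<noteq> 0"
    and "(\<Sum>k<i. Kscalar q n k) \<noteq> 0" and "(\<Sum>k<i. Kscalar (inverse q) n k) \<noteq> 0"
  shows "degree (split_coeff_poly q u v us vs n i) = 2 \<and> coeff (split_coeff_poly q u v us vs n i) 0 \<noteq> 0"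
  using assms by (simp add: split_coeff_poly_def degree_mult_eq coeff_mult_0)

lemma split_seq_prescribable:
  fixes q u v us vs :: "'a::field" and \<zeta> :: "nat \<Rightarrow> 'a"
  assumes alg_closed: "\<forall>p :: 'a poly. 0 < degree p \<longrightarrow> (\<exists>x. poly p x = 0)"
    and q: "q \<noteq> 0" "q ^ 2 \<noteq> 1" and nz: "u \<noteq> 0" "v \<noteq> 0" "us \<noteq> 0" "vs \<noteq> 0"
    and feas: "feasible q d" and z0: "\<zeta> 0 = 1"
  shows "\<exists>as. length as = d \<and> (\<forall>\<alpha>\<in>set as. \<alpha> \<noteq> 0) \<and> (\<forall>i\<le>d. split_seq q u v us vs as i = \<zeta> i)"
  using feas z0
proof (induction d arbitrary: \<zeta>)
  case 0
  then show ?case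
    by (intro exI[of _ "[]"]) (auto simp: split_seq_0)
next
  case (Suc n)
  let ?C = "\<lambda>i a. split_coeff q u v us vs a n i"
  have "degree (split_coeff_poly q u v us vs n i) = 2 \<and> coeff (split_coeff_poly q u v us vs n i) 0 \<noteq> 0"
    if "1 \<le> i" "i \<le> Suc n" for i
  proof (rule degree_split_coeff_poly[OF q(1) nz]; rule sum_Kscalar_nonzero)
    have "q ^ (2 * i) \<noteq> 1"
      using Suc.prems(1) that by (simp add: feasible_def)
    then show "q ^ (2 * i) \<noteq> 1" "inverse q ^ (2 * i) \<noteq> 1"
      by (simp_all add: power_inverse)
  qed (use q that in \<open>simp_all add: power_inverse\<close>)
  then obtain r where "r \<noteq> 0" and r_root: "residual \<zeta> ?C r (Suc n) = 0"
    using residual_has_nonzero_root[OF alg_closed, of "Suc n" ?C "split_coeff_poly q u v us vs n"]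
      poly_split_coeff_poly by blast
  have "feasible q n"
    using Suc.prems(1) by (simp add: feasible_def)
  then obtain as where as: "length as = n" "\<forall>\<alpha>\<in>set as. \<alpha> \<noteq> 0"
      "\<forall>i\<le>n. split_seq q u v us vs as i = residual \<zeta> ?C r i"
    using Suc.IH[of "residual \<zeta> ?C r"] by auto
  have "split_seq q u v us vs (r # as) i = \<zeta> i" if "i \<le> Suc n" for i
  proof (cases i)
    case 0
    then show ?thesis using Suc.prems(2) by (simp add: split_seq_0)
  next
    case (Suc j)
    have "split_seq q u v us vs as (Suc j) = residual \<zeta> ?C r (Suc j)"
    proof (cases "j < n")
      case False
      then show ?thesis
        using as that Suc r_root by (simp add: split_seq_above_length)
    qed (use as in simp)
    then show ?thesis
      using as Suc split_seq_Cons[OF q(1), of "Suc j" u v us vs r as] that by simp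
  qed
  with as \<open>r \<noteq> 0\<close> show ?case
    by (intro exI[of _ "r # as"]) auto
qed

theorem proposition7p2:
  fixes q b c bs cs u v us vs :: "'a::field"
    and d :: nat and \<zeta> :: "nat \<Rightarrow> 'a"
  assumes alg_closed: "\<forall>p :: 'a poly. 0 < degree p \<longrightarrow> (\<exists>x. poly p x = 0)"
    and q_nz: "q \<noteq> 0" and q_sq: "q ^ 2 \<noteq> 1"
    and nz: "b \<noteq> 0" "c \<noteq> 0" "bs \<noteq> 0" "cs \<noteq> 0"
    and uv: "u * vs = - b * bs * inverse q * (q - inverse q) ^ 2"
    and vu: "v * us = - c * cs * inverse q * (q - inverse q) ^ 2"
    and feas: "feasible q d"
    and z0: "\<zeta> 0 = 1"
  shows "\<exists>as :: 'a list. length as = d \<and> (\<forall>\<alpha>\<in>set as. \<alpha> \<noteq> 0) \<and>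
           (\<forall>i\<le>d. split_seq q u v us vs as i = \<zeta> i)"
proof -
  have "q - inverse q \<noteq> 0"
    using q_nz q_sq by (auto simp: power2_eq_square field_simps)
  then have "u * vs \<noteq> 0" and "v * us \<noteq> 0"
    using q_nz nz by (simp_all add: uv vu)
  then have "u \<noteq> 0" "v \<noteq> 0" "us \<noteq> 0" "vs \<noteq> 0"
    by auto
  from split_seq_prescribable[where \<zeta>=\<zeta>, OF alg_closed q_nz q_sq this feas z0] show ?thesis .
qed

end
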